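(* Let $(X,T)$ be a topological dynamical system and let $(K(X),T_K)$ be the induced system on the hyperspace. The following are equivalent: (1) $(K(X),T_K)$ is proximal; (2) $\bigcap_{n=0}^\infty T^nX$ is a singleton; (3) $X$ is a uniformly proximal set, i.e. for every $\varepsilon>0$ there is $n\in\mathbb{N}$ with $\operatorname{diam}(T^nX)<\varepsilon$.
   Context: A topological dynamical system $(X,T)$ consists of a non-empty compact metric space $(X,d)$ and a continuous map $T:X\to X$ (not necessarily surjective). $K(X)$ is the space of non-empty closed subsets of $X$ with the Hausdorff metric $d_H(A,B)=\max\{\max_{x\in A}\min_{y\in B}d(x,y),\max_{y\in B}\min_{x\in A}d(x,y)\}$, and $T_K(C)=T(C)$. A system is proximal if every pair $(u,v)$ satisfies $\liminf_{n\to\infty}\rho(T^nu,T^nv)=0$ for the relevant metric $\rho$. *)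

theory Defs
  imports "HOL-Analysis.Analysis"
begin

text \<open>For compact nonempty sets the suprema
  below are maxima and infdist is a minimum.\<close>
definition hausdorff_dist :: "'a::metric_space set \<Rightarrow> 'a set \<Rightarrow> real" where
  "hausdorff_dist A B = max (SUP x\<in>A. infdist x B) (SUP y\<in>B. infdist y A)"

definition hyperspace :: "'a::metric_space set \<Rightarrow> 'a set set" where
  "hyperspace X = {C. C \<noteq> {} \<and> C \<subseteq> X \<and> closed C}"

definition proximal_sys :: "'b set \<Rightarrow> ('b \<Rightarrow> 'b) \<Rightarrow> ('b \<Rightarrow> 'b \<Rightarrow> real) \<Rightarrow> bool" where
  "proximal_sys S f \<rho> \<longleftrightarrow>
     (\<forall>u\<in>S. \<forall>v\<in>S. liminf (\<lambda>n. ereal (\<rho> ((f ^^ n) u) ((f ^^ n) v))) = 0)"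

definition uniformly_proximal_set :: "('a::metric_space \<Rightarrow> 'a) \<Rightarrow> 'a set \<Rightarrow> bool" where
  "uniformly_proximal_set T A \<longleftrightarrow> (\<forall>\<epsilon>>0. \<exists>n::nat. diameter ((T ^^ n) ` A) < \<epsilon>)"

end

theory Submission
  imports Defs
begin

text \<open>The sets \<open>T\<^sup>n X\<close> form a decreasing sequence of nonempty compact sets. Such a sequence
  shrinks to a single point exactly when its diameters tend to 0, because every open
  neighbourhood of the intersection eventually contains some \<open>T\<^sup>n X\<close>. The Hausdorff
  distance between two subsets of \<open>T\<^sup>n X\<close> is at most \<open>diam (T\<^sup>n X)\<close>, so small diameters
  make \<open>T\<^sub>K\<close> proximal. Conversely \<open>diam A \<le> 2 d\<^sub>H(A, {q})\<close>, so proximality of the pair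
  \<open>(X, {p})\<close> under \<open>T\<^sub>K\<close> forces \<open>diam (T\<^sup>n X)\<close> to become arbitrarily small.\<close>

lemma funpow_image: "((\<lambda>C. f ` C) ^^ n) C = (f ^^ n) ` C" for f :: "'a \<Rightarrow> 'a"
  by (induction n) (simp_all add: image_comp)

lemma funpow_image_subset:
  fixes f :: "'a \<Rightarrow> 'a"
  assumes "f ` S \<subseteq> S"
  shows "(f ^^ n) ` S \<subseteq> S"
  by (induction n) (use assms in auto)

lemma decseq_funpow_image:
  fixes f :: "'a \<Rightarrow> 'a"
  assumes "f ` S \<subseteq> S"
  shows "decseq (\<lambda>n. (f ^^ n) ` S)"
proof (rule decseq_SucI)
  fix n
  have "(f ^^ Suc n) ` S = (f ^^ n) ` (f ` S)"
    by (simp add: funpow_Suc_right image_comp del: funpow.simps)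
  then show "(f ^^ Suc n) ` S \<subseteq> (f ^^ n) ` S"
    using assms by auto
qed

lemma continuous_on_funpow:
  fixes f :: "'a::topological_space \<Rightarrow> 'a"
  assumes "continuous_on S f" "f ` S \<subseteq> S"
  shows "continuous_on S (f ^^ n)"
proof (induction n)
  case (Suc n)
  have "continuous_on S (f \<circ> (f ^^ n))"
    using Suc continuous_on_subset[OF assms(1) funpow_image_subset[OF assms(2)]]
    by (rule continuous_on_compose)
  then show ?case by simp
qed simp

lemma diameter_le_dist:
  fixes S :: "'a::metric_space set"
  assumes "S \<noteq> {}" "\<And>x y. x \<in> S \<Longrightarrow> y \<in> S \<Longrightarrow> dist x y \<le> d"
  shows "diameter S \<le> d"
  unfolding diameter_def using assms by (auto intro!: cSUP_least)

lemma decseq_compact_Inter_nonempty: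
  fixes F :: "nat \<Rightarrow> 'a::metric_space set"
  assumes "decseq F" "\<And>n. compact (F n)" "\<And>n. F n \<noteq> {}"
  shows "\<Inter>(range F) \<noteq> {}"
proof -
  have "F 0 \<inter> \<Inter>(range F) \<noteq> {}"
  proof (rule compact_imp_fip[OF assms(2)])
    show "closed C" if "C \<in> range F" for C
      using that assms(2) compact_imp_closed by blast
    fix G assume "finite G" "G \<subseteq> range F"
    then obtain I where I: "finite I" "G = F ` I"
      by (meson finite_subset_image)
    define m where "m = Max (insert 0 I)"
    have "F m \<subseteq> F i" if "i \<in> insert 0 I" for i
      using that I(1) decseqD[OF assms(1)] unfolding m_def by simp
    then have "F m \<subseteq> F 0 \<inter> \<Inter>G"
      using I(2) by blast
    then show "F 0 \<inter> \<Inter>G \<noteq> {}"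
      using assms(3)[of m] by blast
  qed
  then show ?thesis by blast
qed

lemma decseq_compact_subset_open:
  fixes F :: "nat \<Rightarrow> 'a::metric_space set"
  assumes "decseq F" "\<And>n. compact (F n)" "open U" "\<Inter>(range F) \<subseteq> U"
  shows "\<exists>n. F n \<subseteq> U"
proof -
  have "decseq (\<lambda>n. F n - U)"
    using assms(1) by (auto simp: decseq_def)
  moreover have "compact (F n - U)" for n
    using assms(2,3) by (rule compact_diff)
  moreover have "\<Inter>(range (\<lambda>n. F n - U)) = {}"
    using assms(4) by blast
  ultimately show ?thesis
    using decseq_compact_Inter_nonempty[of "\<lambda>n. F n - U"] by blast
qed

lemma decseq_compact_Inter_singleton_iff:
  fixes F :: "nat \<Rightarrow> 'a::metric_space set"
  assumes "decseq F" "\<And>n. compact (F n)" "\<And>n. F n \<noteq> {}"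
  shows "(\<exists>x. \<Inter>(range F) = {x}) \<longleftrightarrow> (\<forall>\<epsilon>>0. \<exists>n. diameter (F n) < \<epsilon>)"
proof
  assume "\<exists>x. \<Inter>(range F) = {x}"
  then obtain x where x: "\<Inter>(range F) = {x}" ..
  show "\<forall>\<epsilon>>0. \<exists>n. diameter (F n) < \<epsilon>"
  proof (intro allI impI)
    fix \<epsilon> :: real assume "\<epsilon> > 0"
    then obtain n where n: "F n \<subseteq> ball x (\<epsilon>/3)"
      using decseq_compact_subset_open[OF assms(1,2)] x by fastforce
    have "diameter (F n) \<le> 2*\<epsilon>/3"
    proof (rule diameter_le_dist[OF assms(3)])
      fix a b assume "a \<in> F n" "b \<in> F n"
      then have "dist x a < \<epsilon>/3" "dist x b < \<epsilon>/3"
        using n by auto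
      then show "dist a b \<le> 2*\<epsilon>/3"
        using dist_triangle2[of a b x] by (simp add: dist_commute)
    qed
    then show "\<exists>n. diameter (F n) < \<epsilon>"
      using \<open>\<epsilon> > 0\<close> by (intro exI[of _ n]) simp
  qed
next
  assume small: "\<forall>\<epsilon>>0. \<exists>n. diameter (F n) < \<epsilon>"
  have "y = z" if "y \<in> \<Inter>(range F)" "z \<in> \<Inter>(range F)" for y z
  proof (rule ccontr)
    assume "y \<noteq> z"
    then obtain n where "diameter (F n) < dist y z"
      using small zero_less_dist_iff by blast
    moreover have "dist y z \<le> diameter (F n)"
      using that assms(2) compact_imp_bounded by (intro diameter_bounded_bound) auto
    ultimately show False by simp
  qed
  then show "\<exists>x. \<Inter>(range F) = {x}"
    using decseq_compact_Inter_nonempty[OF assms] by blast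
qed

lemma hausdorff_dist_le_diameter:
  fixes S :: "'a::metric_space set"
  assumes "bounded S" "A \<subseteq> S" "B \<subseteq> S" "A \<noteq> {}" "B \<noteq> {}"
  shows "0 \<le> hausdorff_dist A B" "hausdorff_dist A B \<le> diameter S"
proof -
  have infdist_le: "infdist x C \<le> diameter S" if x: "x \<in> S" and C: "C \<subseteq> S" "C \<noteq> {}" for x C
  proof -
    obtain c where "c \<in> C" using C by auto
    then have "infdist x C \<le> dist x c" by (rule infdist_le)
    also have "\<dots> \<le> diameter S"
      using assms(1) x C \<open>c \<in> C\<close> by (intro diameter_bounded_bound) auto
    finally show ?thesis .
  qed
  then show "hausdorff_dist A B \<le> diameter S"
    unfolding hausdorff_dist_def using assms by (auto intro!: cSUP_least)
  obtain a where "a \<in> A" using assms by auto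
  have "0 \<le> infdist a B" by (rule infdist_nonneg)
  also have "\<dots> \<le> (SUP x\<in>A. infdist x B)"
    using \<open>a \<in> A\<close> infdist_le assms
    by (intro cSUP_upper) (auto intro!: bdd_aboveI[of _ "diameter S"])
  finally show "0 \<le> hausdorff_dist A B"
    unfolding hausdorff_dist_def by simp
qed

lemma diameter_le_hausdorff_dist_singleton:
  fixes A :: "'a::metric_space set"
  assumes "bounded A" "A \<noteq> {}"
  shows "diameter A \<le> 2 * hausdorff_dist A {q}"
proof -
  obtain r where r: "\<And>y. y \<in> A \<Longrightarrow> dist q y \<le> r"
    using assms(1) bounded_any_center by blast
  have "dist y q \<le> hausdorff_dist A {q}" if "y \<in> A" for y
  proof -
    have "bdd_above ((\<lambda>a. infdist a {q}) ` A)"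
      using r by (intro bdd_aboveI[of _ r]) (auto simp: infdist_singleton dist_commute)
    then have "infdist y {q} \<le> (SUP a\<in>A. infdist a {q})"
      using that by (rule cSUP_upper2) simp
    then show ?thesis
      unfolding hausdorff_dist_def by (simp add: infdist_singleton)
  qed
  then show ?thesis
    by (intro diameter_le_dist[OF assms(2)]) (smt (verit) dist_triangle2)
qed

lemma hyperspace_proximal_if_uniformly_proximal:
  fixes X :: "'a::metric_space set"
  assumes "bounded X" "T ` X \<subseteq> X" "uniformly_proximal_set T X"
  shows "proximal_sys (hyperspace X) (\<lambda>C. T ` C) hausdorff_dist"
  unfolding proximal_sys_def funpow_image
proof (intro ballI)
  fix u v assume "u \<in> hyperspace X" "v \<in> hyperspace X"
  then have uv: "(T ^^ n) ` u \<subseteq> (T ^^ n) ` X" "(T ^^ n) ` v \<subseteq> (T ^^ n) ` X"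
      "(T ^^ n) ` u \<noteq> {}" "(T ^^ n) ` v \<noteq> {}" for n
    by (auto simp: hyperspace_def)
  have bounded: "bounded ((T ^^ n) ` X)" for n
    using assms(1) funpow_image_subset[OF assms(2)] bounded_subset by blast
  let ?d = "\<lambda>n. hausdorff_dist ((T ^^ n) ` u) ((T ^^ n) ` v)"
  have "?d \<longlonglongrightarrow> 0"
  proof (rule tendstoI)
    fix \<epsilon> :: real assume "\<epsilon> > 0"
    then obtain N where N: "diameter ((T ^^ N) ` X) < \<epsilon>"
      using assms(3) unfolding uniformly_proximal_set_def by blast
    show "\<forall>\<^sub>F n in sequentially. dist (?d n) 0 < \<epsilon>"
    proof (rule eventually_sequentiallyI)
      fix n assume "N \<le> n"
      have "diameter ((T ^^ n) ` X) \<le> diameter ((T ^^ N) ` X)"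
        using decseqD[OF decseq_funpow_image[OF assms(2)] \<open>N \<le> n\<close>] bounded
        by (rule diameter_subset)
      then show "dist (?d n) 0 < \<epsilon>"
        using hausdorff_dist_le_diameter[OF bounded uv, of n] N by simp
    qed
  qed
  then have "(\<lambda>n. ereal (?d n)) \<longlonglongrightarrow> 0"
    by (simp add: zero_ereal_def tendsto_ereal)
  then show "liminf (\<lambda>n. ereal (?d n)) = 0"
    by (rule lim_imp_Liminf[rotated]) simp
qed

lemma uniformly_proximal_if_hyperspace_proximal:
  fixes X :: "'a::metric_space set"
  assumes "bounded X" "closed X" "X \<noteq> {}" "T ` X \<subseteq> X"
    and "proximal_sys (hyperspace X) (\<lambda>C. T ` C) hausdorff_dist"
  shows "uniformly_proximal_set T X"
  unfolding uniformly_proximal_set_def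
proof (intro allI impI)
  fix \<epsilon> :: real assume "\<epsilon> > 0"
  obtain p where "p \<in> X" using assms(3) by auto
  then have "X \<in> hyperspace X" "{p} \<in> hyperspace X"
    using assms(2,3) by (auto simp: hyperspace_def)
  then have liminf: "liminf (\<lambda>n. ereal (hausdorff_dist ((T ^^ n) ` X) {(T ^^ n) p})) = 0"
    using assms(5) unfolding proximal_sys_def funpow_image by fastforce
  have "\<exists>n. hausdorff_dist ((T ^^ n) ` X) {(T ^^ n) p} < \<epsilon>/2"
  proof (rule ccontr)
    assume "\<nexists>n. hausdorff_dist ((T ^^ n) ` X) {(T ^^ n) p} < \<epsilon>/2"
    then have "ereal (\<epsilon>/2) \<le> liminf (\<lambda>n. ereal (hausdorff_dist ((T ^^ n) ` X) {(T ^^ n) p}))"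
      by (intro Liminf_bounded always_eventually) (simp add: not_less)
    then show False
      using liminf \<open>\<epsilon> > 0\<close> by simp
  qed
  then obtain n where n: "hausdorff_dist ((T ^^ n) ` X) {(T ^^ n) p} < \<epsilon>/2" ..
  have "bounded ((T ^^ n) ` X)"
    using assms(1) funpow_image_subset[OF assms(4)] bounded_subset by blast
  then have "diameter ((T ^^ n) ` X) \<le> 2 * hausdorff_dist ((T ^^ n) ` X) {(T ^^ n) p}"
    using assms(3) by (intro diameter_le_hausdorff_dist_singleton) auto
  then show "\<exists>n. diameter ((T ^^ n) ` X) < \<epsilon>"
    using n by (intro exI[of _ n]) simp
qed

lemma Inter_funpow_image_singleton_iff_uniformly_proximal:
  fixes X :: "'a::metric_space set"
  assumes "compact X" "X \<noteq> {}" "continuous_on X T" "T ` X \<subseteq> X"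
  shows "(\<exists>x. (\<Inter>n. (T ^^ n) ` X) = {x}) \<longleftrightarrow> uniformly_proximal_set T X"
  unfolding uniformly_proximal_set_def
proof (rule decseq_compact_Inter_singleton_iff)
  show "decseq (\<lambda>n. (T ^^ n) ` X)"
    using assms(4) by (rule decseq_funpow_image)
  show "compact ((T ^^ n) ` X)" for n
    using continuous_on_funpow[OF assms(3,4)] assms(1) by (rule compact_continuous_image)
  show "(T ^^ n) ` X \<noteq> {}" for n
    using assms(2) by simp
qed

theorem mainTheorem11:
  fixes X :: "'a::metric_space set" and T :: "'a \<Rightarrow> 'a"
  assumes "compact X" and "X \<noteq> {}"
    and "continuous_on X T" and "T ` X \<subseteq> X"
  shows "(proximal_sys (hyperspace X) (\<lambda>C. T ` C) hausdorff_dist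
            \<longleftrightarrow> (\<exists>x. (\<Inter>n. (T ^^ n) ` X) = {x}))
       \<and> ((\<exists>x. (\<Inter>n. (T ^^ n) ` X) = {x}) \<longleftrightarrow> uniformly_proximal_set T X)"
proof -
  have "bounded X" "closed X"
    using assms(1) by (auto intro: compact_imp_bounded compact_imp_closed)
  then have "proximal_sys (hyperspace X) (\<lambda>C. T ` C) hausdorff_dist
               \<longleftrightarrow> uniformly_proximal_set T X"
    using assms(2,4) hyperspace_proximal_if_uniformly_proximal
      uniformly_proximal_if_hyperspace_proximal by blast
  then show ?thesis
    using Inter_funpow_image_singleton_iff_uniformly_proximal[OF assms] by blast
qed

end
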